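(* ${\bf KB^\boxdot}$ is strongly complete with respect to the class of quasi-symmetric bimodal frames: every ${\bf KB^\boxdot}$-consistent set of $\mathcal{L}(\boxdot)$-formulas is satisfiable at some state of some quasi-symmetric bimodal model.
   Context: Fix a nonempty set $\mathbf{P}$ of propositional variables. A bimodal model is $\langle S,R_1,R_2,V\rangle$ with $S$ nonempty, $R_1,R_2\subseteq S\times S$, $V:\mathbf{P}\to\mathcal{P}(S)$. It is quasi-symmetric if for all $i,j\in\{1,2\}$ and all $s,t\in S$ such that $tR_ju$ for some $u\in S$, $sR_it$ implies $tR_is$. $\mathcal{L}(\boxdot):\ \phi::=p\mid\neg\phi\mid(\phi\wedge\phi)\mid\boxdot\phi$. Truth: $\mathcal{M},s\vDash\boxdot\phi$ iff for all $t,u$ with $sR_1t$ and $sR_2u$, ($\mathcal{M},t\vDash\phi\iff\mathcal{M},u\vDash\phi$); atoms and Booleans as usual. ${\bf K^\boxdot}$ has axioms: all instances of propositional tautologies; $\boxdot\top$; $\boxdot\phi\leftrightarrow\boxdot\neg\phi$; $\boxdot\phi\wedge\boxdot\psi\to\boxdot(\phi\wedge\psi)$; $\boxdot\phi\to\boxdot(\phi\vee\psi)\vee\boxdot(\neg\phi\vee\chi)$; rules: modus ponens and RE: from $\phi\leftrightarrow\psi$ infer $\boxdot\phi\leftrightarrow\boxdot\psi$. ${\bf KB^\boxdot}$ is ${\bf K^\boxdot}$ plus the axiom schema $\phi\to\boxdot((\boxdot\phi\wedge\boxdot(\phi\to\psi)\wedge\neg\boxdot\psi)\to\chi)$. A set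 is consistent if no finite conjunction of its members has a provable negation. *)

theory Defs
  imports Main
begin

datatype 'p fm = Atom 'p | Neg "'p fm" | Conj "'p fm" "'p fm" | Dot "'p fm"

definition Disj :: "'p fm \<Rightarrow> 'p fm \<Rightarrow> 'p fm" where
  "Disj a b = Neg (Conj (Neg a) (Neg b))"

definition Imp :: "'p fm \<Rightarrow> 'p fm \<Rightarrow> 'p fm" where
  "Imp a b = Neg (Conj a (Neg b))"

definition Iff :: "'p fm \<Rightarrow> 'p fm \<Rightarrow> 'p fm" where
  "Iff a b = Conj (Imp a b) (Imp b a)"

text \<open>Top is defined as the negation of a contradiction built from a fixed
  (arbitrary) propositional variable; the set of variables is the type 'p,
  which is nonempty.\<close>
definition Top :: "'p fm" where
  "Top = Neg (Conj (Atom (SOME p. True)) (Neg (Atom (SOME p. True))))"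

fun tv :: "('p fm \<Rightarrow> bool) \<Rightarrow> 'p fm \<Rightarrow> bool" where
  "tv g (Atom p) = g (Atom p)"
| "tv g (Neg a) = (\<not> tv g a)"
| "tv g (Conj a b) = (tv g a \<and> tv g b)"
| "tv g (Dot a) = g (Dot a)"

definition tautology :: "'p fm \<Rightarrow> bool" where
  "tautology \<phi> \<longleftrightarrow> (\<forall>g. tv g \<phi>)"

inductive KBdot :: "'p fm \<Rightarrow> bool" where
  Taut: "tautology \<phi> \<Longrightarrow> KBdot \<phi>"
| DotTop: "KBdot (Dot Top)"
| DotNeg: "KBdot (Iff (Dot \<phi>) (Dot (Neg \<phi>)))"
| DotConj: "KBdot (Imp (Conj (Dot \<phi>) (Dot \<psi>)) (Dot (Conj \<phi> \<psi>)))"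
| DotDisj: "KBdot (Imp (Dot \<phi>) (Disj (Dot (Disj \<phi> \<psi>)) (Dot (Disj (Neg \<phi>) \<chi>))))"
| AxB: "KBdot (Imp \<phi> (Dot (Imp (Conj (Conj (Dot \<phi>) (Dot (Imp \<phi> \<psi>))) (Neg (Dot \<psi>))) \<chi>)))"
| MP: "KBdot (Imp \<phi> \<psi>) \<Longrightarrow> KBdot \<phi> \<Longrightarrow> KBdot \<psi>"
| RE: "KBdot (Iff \<phi> \<psi>) \<Longrightarrow> KBdot (Iff (Dot \<phi>) (Dot \<psi>))"

definition conjs :: "'p fm list \<Rightarrow> 'p fm" where
  "conjs xs = foldr Conj xs Top"

definition KBdot_consistent :: "'p fm set \<Rightarrow> bool" where
  "KBdot_consistent \<Gamma> \<longleftrightarrow> (\<forall>xs. set xs \<subseteq> \<Gamma> \<longrightarrow> \<not> KBdot (Neg (conjs xs)))"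

definition bimodal_model :: "'w set \<Rightarrow> ('w \<times> 'w) set \<Rightarrow> ('w \<times> 'w) set \<Rightarrow> ('p \<Rightarrow> 'w set) \<Rightarrow> bool" where
  "bimodal_model S R1 R2 V \<longleftrightarrow> S \<noteq> {} \<and> R1 \<subseteq> S \<times> S \<and> R2 \<subseteq> S \<times> S \<and> (\<forall>p. V p \<subseteq> S)"

definition quasi_symmetric :: "'w set \<Rightarrow> ('w \<times> 'w) set \<Rightarrow> ('w \<times> 'w) set \<Rightarrow> bool" where
  "quasi_symmetric S R1 R2 \<longleftrightarrow>
     (\<forall>Ri \<in> {R1, R2}. \<forall>Rj \<in> {R1, R2}. \<forall>s\<in>S. \<forall>t\<in>S.
        (\<exists>u\<in>S. (t, u) \<in> Rj) \<longrightarrow> (s, t) \<in> Ri \<longrightarrow> (t, s) \<in> Ri)"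

fun sat :: "('w \<times> 'w) set \<Rightarrow> ('w \<times> 'w) set \<Rightarrow> ('p \<Rightarrow> 'w set) \<Rightarrow> 'w \<Rightarrow> 'p fm \<Rightarrow> bool" where
  "sat R1 R2 V s (Atom p) = (s \<in> V p)"
| "sat R1 R2 V s (Neg a) = (\<not> sat R1 R2 V s a)"
| "sat R1 R2 V s (Conj a b) = (sat R1 R2 V s a \<and> sat R1 R2 V s b)"
| "sat R1 R2 V s (Dot a) =
     (\<forall>t u. (s, t) \<in> R1 \<longrightarrow> (s, u) \<in> R2 \<longrightarrow> (sat R1 R2 V t a \<longleftrightarrow> sat R1 R2 V u a))"

end

theory Submission
  imports Defs
begin

text \<open>The canonical model has the maximal consistent sets as states, and a single accessibility
  relation serving as both R1 and R2: N is accessible from M when N contains every formula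
  that Dot-reasoning in M forces to hold at all successors. The B axiom makes this relation
  symmetric wherever it is defined, which is exactly quasi-symmetry; the truth lemma then
  reduces to showing that Dot \<phi> \<notin> M yields successors disagreeing on \<phi>.\<close>

lemma tv_Top [simp]: "tv g Top"
  by (simp add: Top_def)

lemma tv_Imp [simp]: "tv g (Imp a b) \<longleftrightarrow> (tv g a \<longrightarrow> tv g b)"
  by (simp add: Imp_def)

lemma tv_Disj [simp]: "tv g (Disj a b) \<longleftrightarrow> tv g a \<or> tv g b"
  by (simp add: Disj_def)

lemma tv_Iff [simp]: "tv g (Iff a b) \<longleftrightarrow> (tv g a \<longleftrightarrow> tv g b)"
  by (auto simp add: Iff_def)

lemma tv_conjs [simp]: "tv g (conjs xs) \<longleftrightarrow> (\<forall>x\<in>set xs. tv g x)"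
  by (induct xs) (simp_all add: conjs_def)

lemma KBdot_tautologyI: "(\<And>g. tv g \<phi>) \<Longrightarrow> KBdot \<phi>"
  by (rule Taut) (simp add: tautology_def)

lemma KBdot_tv_consequence:
  "KBdot a \<Longrightarrow> (\<And>g. tv g a \<Longrightarrow> tv g b) \<Longrightarrow> KBdot b"
  by (rule MP[of a b]) (auto intro: KBdot_tautologyI)

lemma KBdot_tv_consequence2:
  "KBdot a \<Longrightarrow> KBdot b \<Longrightarrow> (\<And>g. tv g a \<Longrightarrow> tv g b \<Longrightarrow> tv g c) \<Longrightarrow> KBdot c"
  by (rule MP[of b c], rule MP[of a "Imp b c"]) (auto intro: KBdot_tautologyI)

lemma KBdot_Dot_cong: "(\<And>g. tv g a \<longleftrightarrow> tv g b) \<Longrightarrow> KBdot (Iff (Dot a) (Dot b))"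
  by (rule RE, rule KBdot_tautologyI) simp

subsection \<open>Maximal consistent sets\<close>

definition mcs :: "'p fm set \<Rightarrow> bool" where
  "mcs M \<longleftrightarrow> KBdot_consistent M \<and> (\<forall>\<phi>. KBdot_consistent (insert \<phi> M) \<longrightarrow> \<phi> \<in> M)"

lemma KBdot_consistent_Union_chain:
  assumes "C \<noteq> {}" "subset.chain {D. KBdot_consistent D} C"
  shows "KBdot_consistent (\<Union>C)"
  unfolding KBdot_consistent_def
proof (intro allI impI)
  fix xs assume xs: "set xs \<subseteq> \<Union>C"
  obtain D where "D \<in> C" "set xs \<subseteq> D"
    using finite_subset_Union_chain[OF List.finite_set xs assms] .
  moreover have "KBdot_consistent D" if "D \<in> C" for D
    using assms(2) that by (auto simp: subset_chain_def)
  ultimately show "\<not> KBdot (Neg (conjs xs))"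
    unfolding KBdot_consistent_def by blast
qed

lemma lindenbaum:
  assumes "KBdot_consistent \<Gamma>"
  obtains M where "\<Gamma> \<subseteq> M" "mcs M"
proof -
  define A where "A = {D. \<Gamma> \<subseteq> D \<and> KBdot_consistent D}"
  have "\<exists>M\<in>A. \<forall>X\<in>A. M \<subseteq> X \<longrightarrow> X = M"
  proof (rule subset_Zorn_nonempty)
    show "A \<noteq> {}"
      using assms unfolding A_def by blast
    fix C assume C: "C \<noteq> {}" "subset.chain A C"
    then have "C \<subseteq> A" "subset.chain {D. KBdot_consistent D} C"
      by (auto simp: subset_chain_def A_def)
    with C(1) show "\<Union>C \<in> A"
      using KBdot_consistent_Union_chain unfolding A_def by blast
  qed
  then obtain M where M: "M \<in> A" "\<And>X. X \<in> A \<Longrightarrow> M \<subseteq> X \<Longrightarrow> X = M"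
    by blast
  have "mcs M"
    unfolding mcs_def
  proof (intro conjI allI impI)
    show "KBdot_consistent M"
      using M(1) unfolding A_def by blast
    fix \<phi> assume "KBdot_consistent (insert \<phi> M)"
    then have "insert \<phi> M \<in> A"
      using M(1) unfolding A_def by blast
    then show "\<phi> \<in> M"
      using M(2) by blast
  qed
  with M(1) show thesis
    using that unfolding A_def by blast
qed

context
  fixes M :: "'p fm set"
  assumes M: "mcs M"
begin

lemma mcs_derivable:
  assumes "set xs \<subseteq> M" "KBdot (Imp (conjs xs) \<phi>)"
  shows "\<phi> \<in> M"
proof (rule ccontr)
  assume "\<phi> \<notin> M"
  then obtain ys where ys: "set ys \<subseteq> insert \<phi> M" "KBdot (Neg (conjs ys))"
    using M unfolding mcs_def KBdot_consistent_def by blast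
  let ?zs = "xs @ filter (\<lambda>y. y \<noteq> \<phi>) ys"
  have "set ?zs \<subseteq> M"
    using assms(1) ys(1) by auto
  moreover have "KBdot (Neg (conjs ?zs))"
    by (rule KBdot_tv_consequence2[OF assms(2) ys(2)]) auto
  ultimately show False
    using M unfolding mcs_def KBdot_consistent_def by blast
qed

lemma mcs_KBdot: "KBdot \<phi> \<Longrightarrow> \<phi> \<in> M"
  by (rule mcs_derivable[of "[]"]) (auto elim: KBdot_tv_consequence)

lemma mcs_tv_consequence:
  "set xs \<subseteq> M \<Longrightarrow> (\<And>g. \<forall>x\<in>set xs. tv g x \<Longrightarrow> tv g \<phi>) \<Longrightarrow> \<phi> \<in> M"
  by (rule mcs_derivable) (auto intro: KBdot_tautologyI)

lemma mcs_Neg_iff: "Neg \<phi> \<in> M \<longleftrightarrow> \<phi> \<notin> M"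
proof
  assume "Neg \<phi> \<in> M"
  show "\<phi> \<notin> M"
  proof
    assume "\<phi> \<in> M"
    with \<open>Neg \<phi> \<in> M\<close> have "set [\<phi>, Neg \<phi>] \<subseteq> M"
      by simp
    moreover have "KBdot (Neg (conjs [\<phi>, Neg \<phi>]))"
      by (rule KBdot_tautologyI) simp
    ultimately show False
      using M unfolding mcs_def KBdot_consistent_def by blast
  qed
next
  assume "\<phi> \<notin> M"
  then obtain ys where ys: "set ys \<subseteq> insert \<phi> M" "KBdot (Neg (conjs ys))"
    using M unfolding mcs_def KBdot_consistent_def by blast
  let ?ys = "filter (\<lambda>y. y \<noteq> \<phi>) ys"
  have "KBdot (Imp (conjs ?ys) (Neg \<phi>))"
    by (rule KBdot_tv_consequence[OF ys(2)]) auto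
  then show "Neg \<phi> \<in> M"
    by (rule mcs_derivable[rotated]) (use ys(1) in auto)
qed

lemma mcs_Conj_iff: "Conj a b \<in> M \<longleftrightarrow> a \<in> M \<and> b \<in> M"
proof
  assume "Conj a b \<in> M"
  then show "a \<in> M \<and> b \<in> M"
    using mcs_tv_consequence[of "[Conj a b]" a] mcs_tv_consequence[of "[Conj a b]" b] by simp
next
  assume "a \<in> M \<and> b \<in> M"
  then show "Conj a b \<in> M"
    using mcs_tv_consequence[of "[a, b]" "Conj a b"] by simp
qed

lemma mcs_Imp_mp: "Imp a b \<in> M \<Longrightarrow> a \<in> M \<Longrightarrow> b \<in> M"
  using mcs_tv_consequence[of "[Imp a b, a]" b] by simp

lemma mcs_KBdot_Iff: "KBdot (Iff a b) \<Longrightarrow> a \<in> M \<longleftrightarrow> b \<in> M"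
proof -
  assume "KBdot (Iff a b)"
  then have "KBdot (Imp (conjs [a]) b)" "KBdot (Imp (conjs [b]) a)"
    by (auto elim!: KBdot_tv_consequence)
  then show ?thesis
    using mcs_derivable[of "[a]" b] mcs_derivable[of "[b]" a] by auto
qed

lemma mcs_Disj_iff: "Disj a b \<in> M \<longleftrightarrow> a \<in> M \<or> b \<in> M"
  unfolding Disj_def using mcs_Neg_iff mcs_Conj_iff by blast

lemma mcs_Dot_cong: "(\<And>g. tv g a \<longleftrightarrow> tv g b) \<Longrightarrow> Dot a \<in> M \<longleftrightarrow> Dot b \<in> M"
  by (rule mcs_KBdot_Iff[OF KBdot_Dot_cong])

lemma mcs_Dot_Neg_iff: "Dot (Neg a) \<in> M \<longleftrightarrow> Dot a \<in> M"
  using mcs_KBdot_Iff[OF DotNeg] by blast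

lemma mcs_Dot_Conj: "Dot a \<in> M \<Longrightarrow> Dot b \<in> M \<Longrightarrow> Dot (Conj a b) \<in> M"
  using mcs_Imp_mp[OF mcs_KBdot[OF DotConj]] mcs_Conj_iff by blast

lemma mcs_Dot_Imp: "Dot a \<in> M \<Longrightarrow> Dot b \<in> M \<Longrightarrow> Dot (Imp a b) \<in> M"
  unfolding Imp_def using mcs_Dot_Neg_iff mcs_Dot_Conj by blast

lemma mcs_Dot_Iff: "Dot a \<in> M \<Longrightarrow> Dot b \<in> M \<Longrightarrow> Dot (Iff a b) \<in> M"
  unfolding Iff_def using mcs_Dot_Imp mcs_Dot_Conj by blast

lemma mcs_Dot_Disj_cases: "Dot a \<in> M \<Longrightarrow> Dot (Disj a b) \<in> M \<or> Dot (Disj (Neg a) c) \<in> M"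
  using mcs_Imp_mp[OF mcs_KBdot[OF DotDisj]] mcs_Disj_iff by blast

lemma mcs_Dot_B:
  "a \<in> M \<Longrightarrow> Dot (Imp (Conj (Conj (Dot a) (Dot (Imp a b))) (Neg (Dot b))) c) \<in> M"
  using mcs_Imp_mp[OF mcs_KBdot[OF AxB]] by blast

lemma mcs_Dot_Top: "Dot Top \<in> M"
  by (rule mcs_KBdot[OF DotTop])

end

subsection \<open>The canonical relation\<close>

text \<open>Among the successors of M, a formula \<chi> with Dot \<chi> \<notin> M takes both truth values; so if
  \<psi> and \<chi> \<rightarrow> \<psi> are both constant, \<chi> \<rightarrow> \<psi> is constantly true and \<psi> holds at every successor.\<close>

definition forced :: "'p fm set \<Rightarrow> 'p fm set" where
  "forced M = {\<psi>. \<exists>\<chi>. Dot \<chi> \<notin> M \<and> Dot \<psi> \<in> M \<and> Dot (Imp \<chi> \<psi>) \<in> M}"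

definition canonical_rel :: "'p fm set \<Rightarrow> 'p fm set \<Rightarrow> bool" where
  "canonical_rel M N \<longleftrightarrow> (\<exists>\<chi>. Dot \<chi> \<notin> M) \<and> forced M \<subseteq> N"

context
  fixes M :: "'p fm set"
  assumes M: "mcs M"
begin

lemma forced_Dot_Imp:
  assumes "\<psi> \<in> forced M"
  shows "Dot (Imp \<phi> \<psi>) \<in> M"
proof -
  obtain \<chi> where \<chi>: "Dot \<chi> \<notin> M" "Dot \<psi> \<in> M" "Dot (Imp \<chi> \<psi>) \<in> M"
    using assms unfolding forced_def by blast
  consider "Dot (Disj \<psi> (Neg \<phi>)) \<in> M" | "Dot (Disj (Neg \<psi>) \<chi>) \<in> M"
    using mcs_Dot_Disj_cases[OF M \<chi>(2)] by blast
  then show ?thesis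
  proof cases
    case 1
    then show ?thesis
      using mcs_Dot_cong[OF M, of "Disj \<psi> (Neg \<phi>)" "Imp \<phi> \<psi>"] by auto
  next
    case 2
    \<comment> \<open>Then \<chi> \<leftrightarrow> \<psi> is constant, and so is \<chi>, being equivalent to \<psi> \<leftrightarrow> (\<chi> \<leftrightarrow> \<psi>).\<close>
    have "Dot (Conj (Imp \<chi> \<psi>) (Disj (Neg \<psi>) \<chi>)) \<in> M"
      using mcs_Dot_Conj[OF M \<chi>(3) 2] .
    then have "Dot (Iff \<chi> \<psi>) \<in> M"
      using mcs_Dot_cong[OF M, of "Conj (Imp \<chi> \<psi>) (Disj (Neg \<psi>) \<chi>)" "Iff \<chi> \<psi>"] by auto
    then have "Dot (Iff \<psi> (Iff \<chi> \<psi>)) \<in> M"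
      using mcs_Dot_Iff[OF M \<chi>(2)] by blast
    then have "Dot \<chi> \<in> M"
      using mcs_Dot_cong[OF M, of "Iff \<psi> (Iff \<chi> \<psi>)" \<chi>] by auto
    with \<chi>(1) show ?thesis
      by blast
  qed
qed


lemma forced_Top: "Dot \<chi> \<notin> M \<Longrightarrow> Top \<in> forced M"
  unfolding forced_def using mcs_Dot_Top[OF M] mcs_Dot_cong[OF M, of "Imp \<chi> Top" Top] by auto

lemma forced_Conj:
  assumes "a \<in> forced M" "b \<in> forced M"
  shows "Conj a b \<in> forced M"
proof -
  obtain \<chi> where \<chi>: "Dot \<chi> \<notin> M" "Dot a \<in> M" "Dot (Imp \<chi> a) \<in> M"
    using assms(1) unfolding forced_def by blast
  have "Dot b \<in> M"
    using assms(2) unfolding forced_def by blast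
  then have "Dot (Conj a b) \<in> M"
    using mcs_Dot_Conj[OF M \<chi>(2)] by blast
  moreover have "Dot (Conj (Imp \<chi> a) (Imp \<chi> b)) \<in> M"
    using mcs_Dot_Conj[OF M \<chi>(3) forced_Dot_Imp[OF assms(2)]] .
  then have "Dot (Imp \<chi> (Conj a b)) \<in> M"
    using mcs_Dot_cong[OF M, of "Conj (Imp \<chi> a) (Imp \<chi> b)" "Imp \<chi> (Conj a b)"] by auto
  ultimately show ?thesis
    using \<chi>(1) unfolding forced_def by blast
qed

lemma forced_conjs: "Dot \<chi> \<notin> M \<Longrightarrow> set ys \<subseteq> forced M \<Longrightarrow> conjs ys \<in> forced M"
  by (induct ys) (simp_all add: conjs_def forced_Top forced_Conj)

lemma forced_B:
  assumes "Dot \<chi> \<notin> M" "a \<in> M"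
  shows "Neg (Conj (Conj (Dot a) (Dot (Imp a b))) (Neg (Dot b))) \<in> forced M"
    (is "Neg ?X \<in> _")
proof -
  have "Dot (Imp ?X (Neg Top)) \<in> M" "Dot (Imp ?X (Neg \<chi>)) \<in> M"
    using mcs_Dot_B[OF M assms(2)] by blast+
  then have "Dot (Neg ?X) \<in> M" "Dot (Imp \<chi> (Neg ?X)) \<in> M"
    using mcs_Dot_cong[OF M, of "Imp ?X (Neg Top)" "Neg ?X"]
      mcs_Dot_cong[OF M, of "Imp ?X (Neg \<chi>)" "Imp \<chi> (Neg ?X)"] by auto
  with assms(1) show ?thesis
    unfolding forced_def by blast
qed

lemma Dot_imp_forced_or_forced_Neg:
  assumes "Dot \<chi> \<notin> M" "Dot \<phi> \<in> M"
  shows "\<phi> \<in> forced M \<or> Neg \<phi> \<in> forced M"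
proof -
  consider "Dot (Disj \<phi> (Neg \<chi>)) \<in> M" | "Dot (Disj (Neg \<phi>) (Neg \<chi>)) \<in> M"
    using mcs_Dot_Disj_cases[OF M assms(2)] by blast
  then show ?thesis
  proof cases
    case 1
    then have "Dot (Imp \<chi> \<phi>) \<in> M"
      using mcs_Dot_cong[OF M, of "Disj \<phi> (Neg \<chi>)" "Imp \<chi> \<phi>"] by auto
    then show ?thesis
      using assms unfolding forced_def by blast
  next
    case 2
    then have "Dot (Imp \<chi> (Neg \<phi>)) \<in> M"
      using mcs_Dot_cong[OF M, of "Disj (Neg \<phi>) (Neg \<chi>)" "Imp \<chi> (Neg \<phi>)"] by auto
    moreover have "Dot (Neg \<phi>) \<in> M"
      using mcs_Dot_Neg_iff[OF M] assms(2) by blast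
    ultimately show ?thesis
      using assms(1) unfolding forced_def by blast
  qed
qed

lemma KBdot_consistent_insert_forced:
  assumes "Dot \<phi> \<notin> M"
  shows "KBdot_consistent (insert \<phi> (forced M))"
  unfolding KBdot_consistent_def
proof (intro allI impI notI)
  fix xs assume xs: "set xs \<subseteq> insert \<phi> (forced M)" and incons: "KBdot (Neg (conjs xs))"
  let ?ys = "filter (\<lambda>x. x \<noteq> \<phi>) xs"
  have "set ?ys \<subseteq> forced M"
    using xs by auto
  then have "Dot (Imp \<phi> (conjs ?ys)) \<in> M"
    by (intro forced_Dot_Imp forced_conjs[OF assms])
  moreover have "KBdot (Iff (Imp \<phi> (conjs ?ys)) (Neg \<phi>))"
    by (rule KBdot_tv_consequence[OF incons]) auto
  ultimately have "Dot (Neg \<phi>) \<in> M"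
    using mcs_KBdot_Iff[OF M RE] by blast
  with assms show False
    using mcs_Dot_Neg_iff[OF M] by blast
qed

lemma canonical_successor_exists:
  assumes "Dot \<phi> \<notin> M"
  obtains N where "mcs N" "canonical_rel M N" "\<phi> \<in> N"
proof -
  obtain N where N: "insert \<phi> (forced M) \<subseteq> N" "mcs N"
    using lindenbaum[OF KBdot_consistent_insert_forced[OF assms]] .
  with assms have "canonical_rel M N"
    unfolding canonical_rel_def by blast
  with N show thesis
    using that by blast
qed

lemma canonical_successors_agree:
  assumes "canonical_rel M N" "canonical_rel M N'" "mcs N" "Dot \<phi> \<in> M" "\<phi> \<in> N"
  shows "\<phi> \<in> N'"
proof -
  obtain \<chi> where "Dot \<chi> \<notin> M"
    using assms(1) unfolding canonical_rel_def by blast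
  then have "\<phi> \<in> forced M \<or> Neg \<phi> \<in> forced M"
    using assms(4) by (rule Dot_imp_forced_or_forced_Neg)
  moreover have "forced M \<subseteq> N" "forced M \<subseteq> N'"
    using assms(1,2) unfolding canonical_rel_def by blast+
  moreover have "Neg \<phi> \<notin> N"
    using assms(5) mcs_Neg_iff[OF \<open>mcs N\<close>] by blast
  ultimately show ?thesis
    by blast
qed

end

lemma canonical_rel_sym:
  assumes M: "mcs M" and N: "mcs N" and MN: "canonical_rel M N" and "\<exists>\<chi>. Dot \<chi> \<notin> N"
  shows "canonical_rel N M"
  unfolding canonical_rel_def
proof (intro conjI assms(4) subsetI)
  fix \<psi> assume \<psi>: "\<psi> \<in> forced N"
  then obtain \<chi> where \<chi>: "Dot \<chi> \<notin> N" "Dot \<psi> \<in> N"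
    unfolding forced_def by blast
  show "\<psi> \<in> M"
  proof (rule ccontr)
    \<comment> \<open>By B, \<not>\<psi> at M makes every successor refute Dot \<not>\<psi> \<and> Dot (\<not>\<psi> \<rightarrow> \<chi>) \<and> \<not> Dot \<chi>,
      which holds at N because \<psi> is forced there.\<close>
    assume "\<psi> \<notin> M"
    then have "Neg \<psi> \<in> M"
      using mcs_Neg_iff[OF M] by blast
    moreover obtain \<chi>' where "Dot \<chi>' \<notin> M"
      using MN unfolding canonical_rel_def by blast
    ultimately have "Neg (Conj (Conj (Dot (Neg \<psi>)) (Dot (Imp (Neg \<psi>) \<chi>))) (Neg (Dot \<chi>))) \<in> N"
      using forced_B[OF M] MN unfolding canonical_rel_def by blast
    moreover have "Dot (Neg \<psi>) \<in> N"
      using mcs_Dot_Neg_iff[OF N] \<chi>(2) by blast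
    moreover have "Dot (Imp (Neg \<chi>) \<psi>) \<in> N"
      using forced_Dot_Imp[OF N \<psi>] .
    then have "Dot (Imp (Neg \<psi>) \<chi>) \<in> N"
      using mcs_Dot_cong[OF N, of "Imp (Neg \<chi>) \<psi>" "Imp (Neg \<psi>) \<chi>"] by auto
    ultimately show False
      using \<chi>(1) mcs_Neg_iff[OF N] mcs_Conj_iff[OF N] by blast
  qed
qed

subsection \<open>The canonical model\<close>

text \<open>The type of states is fixed to pairs of formula sets; the second component is ignored.\<close>

definition canonical_states :: "('p fm set \<times> 'p fm set) set" where
  "canonical_states = {w. mcs (fst w)}"

definition canonical_acc :: "(('p fm set \<times> 'p fm set) \<times> ('p fm set \<times> 'p fm set)) set" where
  "canonical_acc = {(v, w). v \<in> canonical_states \<and> w \<in> canonical_states \<and> canonical_rel (fst v) (fst w)}"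

definition canonical_val :: "'p \<Rightarrow> ('p fm set \<times> 'p fm set) set" where
  "canonical_val p = {w \<in> canonical_states. Atom p \<in> fst w}"

lemma bimodal_model_canonical:
  assumes "(canonical_states :: ('p fm set \<times> 'p fm set) set) \<noteq> {}"
  shows "bimodal_model canonical_states canonical_acc canonical_acc (canonical_val :: 'p \<Rightarrow> _)"
  using assms unfolding bimodal_model_def canonical_acc_def canonical_val_def by blast

lemma quasi_symmetric_canonical: "quasi_symmetric canonical_states canonical_acc canonical_acc"
  unfolding quasi_symmetric_def
proof (intro ballI impI)
  fix R R' s t
  assume "R \<in> {canonical_acc, canonical_acc}" "R' \<in> {canonical_acc, canonical_acc}"
    and st: "s \<in> canonical_states" "t \<in> canonical_states"
    and "\<exists>u\<in>canonical_states. (t, u) \<in> R'" "(s, t) \<in> R"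
  then have "R = canonical_acc" "\<exists>\<chi>. Dot \<chi> \<notin> fst t" "canonical_rel (fst s) (fst t)"
    by (auto simp: canonical_acc_def canonical_rel_def)
  then show "(t, s) \<in> R"
    using canonical_rel_sym st by (auto simp: canonical_states_def canonical_acc_def)
qed

lemma truth_lemma:
  "w \<in> canonical_states \<Longrightarrow> sat canonical_acc canonical_acc canonical_val w \<phi> \<longleftrightarrow> \<phi> \<in> fst w"
proof (induct \<phi> arbitrary: w)
  case (Atom p)
  then show ?case
    by (simp add: canonical_val_def)
next
  case (Neg \<phi>)
  then show ?case
    using mcs_Neg_iff[of "fst w" \<phi>] by (simp add: canonical_states_def)
next
  case (Conj \<phi> \<psi>)
  then show ?case
    using mcs_Conj_iff[of "fst w" \<phi> \<psi>] by (simp add: canonical_states_def)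
next
  case (Dot \<phi>)
  have M: "mcs (fst w)"
    using Dot.prems by (simp add: canonical_states_def)
  have acc: "(w, v) \<in> canonical_acc \<longleftrightarrow> mcs (fst v) \<and> canonical_rel (fst w) (fst v)" for v
    using Dot.prems by (simp add: canonical_acc_def canonical_states_def)
  have "sat canonical_acc canonical_acc canonical_val w (Dot \<phi>) \<longleftrightarrow>
      (\<forall>v v'. (w, v) \<in> canonical_acc \<longrightarrow> (w, v') \<in> canonical_acc \<longrightarrow> (\<phi> \<in> fst v \<longleftrightarrow> \<phi> \<in> fst v'))"
    using Dot.hyps by (simp add: acc canonical_states_def)
  also have "\<dots> \<longleftrightarrow> Dot \<phi> \<in> fst w"
  proof
    assume agree: "\<forall>v v'. (w, v) \<in> canonical_acc \<longrightarrow> (w, v') \<in> canonical_acc \<longrightarrow> (\<phi> \<in> fst v \<longleftrightarrow> \<phi> \<in> fst v')"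
    show "Dot \<phi> \<in> fst w"
    proof (rule ccontr)
      assume "Dot \<phi> \<notin> fst w"
      moreover from this have "Dot (Neg \<phi>) \<notin> fst w"
        using mcs_Dot_Neg_iff[OF M] by blast
      ultimately obtain N N' where N: "mcs N" "canonical_rel (fst w) N" "\<phi> \<in> N"
        and N': "mcs N'" "canonical_rel (fst w) N'" "Neg \<phi> \<in> N'"
        using canonical_successor_exists[OF M] by metis
      then have "(w, (N, {})) \<in> canonical_acc" "(w, (N', {})) \<in> canonical_acc"
        by (simp_all add: acc)
      with agree N(3) have "\<phi> \<in> N'"
        by fastforce
      with N' show False
        using mcs_Neg_iff by blast
    qed
  next
    assume "Dot \<phi> \<in> fst w"
    then show "\<forall>v v'. (w, v) \<in> canonical_acc \<longrightarrow> (w, v') \<in> canonical_acc \<longrightarrow> (\<phi> \<in> fst v \<longleftrightarrow> \<phi> \<in> fst v')"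
      using canonical_successors_agree[OF M] by (auto simp: acc)
  qed
  finally show ?case .
qed

theorem mainTheorem14:
  fixes \<Gamma> :: "'p fm set"
  assumes "KBdot_consistent \<Gamma>"
  shows "\<exists>(S :: ('p fm set \<times> 'p fm set) set) R1 R2 V s.
           bimodal_model S R1 R2 V \<and> quasi_symmetric S R1 R2 \<and> s \<in> S \<and>
           (\<forall>\<phi>\<in>\<Gamma>. sat R1 R2 V s \<phi>)"
proof -
  obtain M where M: "\<Gamma> \<subseteq> M" "mcs M"
    using lindenbaum[OF assms] .
  let ?w = "(M, {}) :: 'p fm set \<times> 'p fm set"
  have w: "?w \<in> canonical_states"
    using M(2) by (simp add: canonical_states_def)
  then have "bimodal_model canonical_states canonical_acc canonical_acc (canonical_val :: 'p \<Rightarrow> _)"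
    by (intro bimodal_model_canonical) blast
  moreover have "\<forall>\<phi>\<in>\<Gamma>. sat canonical_acc canonical_acc canonical_val ?w \<phi>"
    using truth_lemma[OF w] M(1) by auto
  ultimately show ?thesis
    using quasi_symmetric_canonical w by (intro exI conjI)
qed

end
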